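(* Let $F$ be a $4$-regular graph, let $D$ be a directed version of $F$, let $\mathbf{o}$ be a transitional orientation of $F$, and let $P$ be a circuit partition of $F$. Then for every closed walk $W$ of $F$, \[\sigma(D,W)\cdot \Delta_{D,\mathbf{o}}|_{\tau(P)} = \sigma(\mathrm{Tch}_{\mathbf{o}}(P),\pi_P(W)),\] where the $\sigma$-vectors are regarded as row vectors.
   Context: Graphs: $G=(V,H,E,\epsilon)$ with finite sets of vertices $V$ and half-edges $H$, a partition $E$ of $H$ into unordered pairs (edges), and $\epsilon:H\to V$; loops and multiple edges allowed. A directed version orders each edge as (tail, head). A single transition is an unordered pair of distinct half-edges incident with a common vertex; a directed single transition is such an ordered pair. A closed walk is a sequence $((h_1,h_2),\dots,(h_{n-1},h_n))$ of directed single transitions with $\{h_2,h_3\},\{h_4,h_5\},\dots,\{h_n,h_1\}$ edges, up to cyclic shift. For a directed version $D$ and closed walk $W$, $\sigma(D,W)\in\mathbb Z^{E}$ counts, at each edge $e$, traversals of $e$ along its direction minus traversals against it. A circuit is a nonempty closed walk using each half-edge at most once, with orientation forgotten. $F$ is $4$-regular if every vertex is incident with exactly $4$ half-edges. A transition at $v$ is a partition of the four half-edges at $v$ into two single transitions; $\mathfrak T(F)$ is the set of all transitions. A circuit partition $P$ is a set of circuits of $F$ such that every half-edge lies in exactly one single transition of exactly one circuit of $P$; $\tau(P)$ is the set of transitions both of whose single transitions occur in circuits of $P$ (one transition per vertex). The touch-graph $\mathrm{Tch}(P)$ has vertex set $P$, half-edge set the set of single transitions occurring in circuits of $P$, edge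 set $\tau(P)$ (each transition being a pair of single transitions), and maps each single transition to the circuit containing it. A transitional orientation $\mathbf o$ assigns to each $t\in\mathfrak T(F)$ one of its two single transitions $\mathbf o(t)$. $\mathrm{Tch}_{\mathbf o}(P)$ is the directed version of $\mathrm{Tch}(P)$ in which each edge $t$ has head $\mathbf o(t)$ and tail the other single transition of $t$. For a closed walk $W$ of $F$, $\pi_P(W)$ is obtained by replacing each directed single transition $(h,h')$ of $W$ by $(s,s')$, where $s,s'$ are the single transitions of circuits of $P$ containing $h$, $h'$ respectively, and deleting the pairs with $s=s'$; it is a closed walk of $\mathrm{Tch}(P)$ in which each remaining pair $(s,s')$ traverses the edge $\{s,s'\}\in\tau(P)$ from half-edge $s$ to half-edge $s'$. The edge-transition incidence matrix $\Delta_{D,\mathbf o}$ is the $E(F)\times\mathfrak T(F)$ matrix over $\mathbb Q$ whose $(e,t)$ entry is $1$ if $e\cap\mathbf o(t)=\{h\}$ with $h$ the tail of $e$ in $D$, $-1$ if $e\cap \mathbf o(t)=\{h\}$ with $h$ the head of $e$ in $D$, and $0$ otherwise. For $Y\subseteq\mathfrak T(F)$, $A|_Y$ denotes the column restriction to $Y$. *)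

theory Defs
  imports Main "HOL.Rat"
begin

definition graph :: "'v set \<Rightarrow> 'h set \<Rightarrow> 'h set set \<Rightarrow> ('h \<Rightarrow> 'v) \<Rightarrow> bool" where
  "graph V H E eps \<longleftrightarrow> finite V \<and> finite H \<and>
     (\<forall>e\<in>E. e \<subseteq> H \<and> card e = 2) \<and> (\<forall>h\<in>H. \<exists>!e. e \<in> E \<and> h \<in> e) \<and>
     (\<forall>h\<in>H. eps h \<in> V)"

text \<open>A directed version is given by choosing the tail of each edge; the head is the other half-edge.\<close>
definition directed_version :: "'h set set \<Rightarrow> ('h set \<Rightarrow> 'h) \<Rightarrow> bool" where
  "directed_version E tailf \<longleftrightarrow> (\<forall>e\<in>E. tailf e \<in> e)"

definition four_regular :: "'v set \<Rightarrow> 'h set \<Rightarrow> ('h \<Rightarrow> 'v) \<Rightarrow> bool" where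
  "four_regular V H eps \<longleftrightarrow> (\<forall>v\<in>V. card {h\<in>H. eps h = v} = 4)"

definition single_transition :: "'h set \<Rightarrow> ('h \<Rightarrow> 'v) \<Rightarrow> 'h set \<Rightarrow> bool" where
  "single_transition H eps s \<longleftrightarrow> (\<exists>a b. s = {a, b} \<and> a \<noteq> b \<and> a \<in> H \<and> b \<in> H \<and> eps a = eps b)"

definition dir_single_transition :: "'h set \<Rightarrow> ('h \<Rightarrow> 'v) \<Rightarrow> 'h \<times> 'h \<Rightarrow> bool" where
  "dir_single_transition H eps p \<longleftrightarrow>
     fst p \<noteq> snd p \<and> fst p \<in> H \<and> snd p \<in> H \<and> eps (fst p) = eps (snd p)"

text \<open>A closed walk ((h1,h2),...,(h(n-1),hn)) as a list of directed single transitions; the edges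
  {h2,h3},...,{hn,h1} join consecutive entries cyclically.\<close>
definition closed_walk :: "'h set \<Rightarrow> 'h set set \<Rightarrow> ('h \<Rightarrow> 'v) \<Rightarrow> ('h \<times> 'h) list \<Rightarrow> bool" where
  "closed_walk H E eps W \<longleftrightarrow> (\<forall>p\<in>set W. dir_single_transition H eps p) \<and>
     (\<forall>i<length W. {snd (W ! i), fst (W ! (Suc i mod length W))} \<in> E)"

definition walk_travs :: "('h \<times> 'h) list \<Rightarrow> ('h \<times> 'h) list" where
  "walk_travs W = map (\<lambda>i. (snd (W ! i), fst (W ! (Suc i mod length W)))) [0..<length W]"

definition sigma_trav :: "('x set \<Rightarrow> 'x) \<Rightarrow> ('x \<times> 'x) list \<Rightarrow> 'x set \<Rightarrow> int" where
  "sigma_trav tailf trs e = (\<Sum>p\<leftarrow>trs. if {fst p, snd p} = e then (if fst p = tailf e then 1 else -1) else 0)"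

definition sigma :: "('h set \<Rightarrow> 'h) \<Rightarrow> ('h \<times> 'h) list \<Rightarrow> 'h set \<Rightarrow> int" where
  "sigma tailf W = sigma_trav tailf (walk_travs W)"

text \<open>Circuits: equivalence classes of nonempty closed walks using every half-edge at most once,
  under cyclic shift and reversal.\<close>
definition walk_half_edges :: "('h \<times> 'h) list \<Rightarrow> 'h list" where
  "walk_half_edges W = concat (map (\<lambda>p. [fst p, snd p]) W)"

definition reverse_walk :: "('h \<times> 'h) list \<Rightarrow> ('h \<times> 'h) list" where
  "reverse_walk W = rev (map prod.swap W)"

definition walk_class :: "('h \<times> 'h) list \<Rightarrow> ('h \<times> 'h) list set" where
  "walk_class W = {rotate k W' | k W'. W' \<in> {W, reverse_walk W}}"

definition circuit :: "'h set \<Rightarrow> 'h set set \<Rightarrow> ('h \<Rightarrow> 'v) \<Rightarrow> ('h \<times> 'h) list set \<Rightarrow> bool" where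
  "circuit H E eps C \<longleftrightarrow> (\<exists>W. closed_walk H E eps W \<and> W \<noteq> [] \<and>
      distinct (walk_half_edges W) \<and> C = walk_class W)"

definition circ_strans :: "('h \<times> 'h) list set \<Rightarrow> 'h set set" where
  "circ_strans C = (\<Union>W\<in>C. (\<lambda>p. {fst p, snd p}) ` set W)"

definition transitions :: "'v set \<Rightarrow> 'h set \<Rightarrow> ('h \<Rightarrow> 'v) \<Rightarrow> 'h set set set" where
  "transitions V H eps = {t. \<exists>v\<in>V. \<exists>s1 s2. t = {s1, s2} \<and> single_transition H eps s1 \<and>
      single_transition H eps s2 \<and> s1 \<inter> s2 = {} \<and> s1 \<union> s2 = {h\<in>H. eps h = v}}"

definition transitional_orientation ::
  "'v set \<Rightarrow> 'h set \<Rightarrow> ('h \<Rightarrow> 'v) \<Rightarrow> ('h set set \<Rightarrow> 'h set) \<Rightarrow> bool" where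
  "transitional_orientation V H eps ori \<longleftrightarrow> (\<forall>t\<in>transitions V H eps. ori t \<in> t)"

definition circuit_partition ::
  "'h set \<Rightarrow> 'h set set \<Rightarrow> ('h \<Rightarrow> 'v) \<Rightarrow> ('h \<times> 'h) list set set \<Rightarrow> bool" where
  "circuit_partition H E eps P \<longleftrightarrow> (\<forall>C\<in>P. circuit H E eps C) \<and>
     (\<forall>h\<in>H. \<exists>!(C, s). C \<in> P \<and> s \<in> circ_strans C \<and> h \<in> s)"

text \<open>Single transitions occurring in circuits of P (half-edges of the touch-graph).\<close>
definition P_strans :: "('h \<times> 'h) list set set \<Rightarrow> 'h set set" where
  "P_strans P = (\<Union>C\<in>P. circ_strans C)"

definition tau :: "'v set \<Rightarrow> 'h set \<Rightarrow> ('h \<Rightarrow> 'v) \<Rightarrow> ('h \<times> 'h) list set set \<Rightarrow> 'h set set set" where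
  "tau V H eps P = {t \<in> transitions V H eps. \<forall>s\<in>t. s \<in> P_strans P}"

text \<open>Tch_o(P): the edge t has head ori t and tail the other single transition of t.\<close>
definition tch_tail :: "('h set set \<Rightarrow> 'h set) \<Rightarrow> 'h set set \<Rightarrow> 'h set" where
  "tch_tail ori t = (THE s. s \<in> t \<and> s \<noteq> ori t)"

definition st_of :: "('h \<times> 'h) list set set \<Rightarrow> 'h \<Rightarrow> 'h set" where
  "st_of P h = (THE s. s \<in> P_strans P \<and> h \<in> s)"

text \<open>pi_P(W), as the list of its edge traversals (s,s') of Tch(P).\<close>
definition pi_P :: "('h \<times> 'h) list set set \<Rightarrow> ('h \<times> 'h) list \<Rightarrow> ('h set \<times> 'h set) list" where
  "pi_P P W = filter (\<lambda>q. fst q \<noteq> snd q) (map (\<lambda>p. (st_of P (fst p), st_of P (snd p))) W)"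

definition Delta :: "('h set \<Rightarrow> 'h) \<Rightarrow> ('h set set \<Rightarrow> 'h set) \<Rightarrow> 'h set \<Rightarrow> 'h set set \<Rightarrow> rat" where
  "Delta tailf ori e t =
     (if \<exists>h. e \<inter> ori t = {h} then
        (if e \<inter> ori t = {tailf e} then 1 else -1)
      else 0)"

end

theory Submission
  imports Defs
begin

text \<open>Fix a transition \<open>t\<close> at \<open>v\<close> with head \<open>O = ori t\<close> and let \<open>f h = [h \<in> O]\<close>.
  An edge traversal from \<open>a\<close> to \<open>b\<close> contributes \<open>f a - f b\<close> to the left-hand side, since both
  the sign of the traversal and the entry of \<open>\<Delta>\<close> flip when the edge is reversed. A directed
  single transition \<open>(h, h')\<close> of \<open>W\<close> contributes \<open>f h' - f h\<close> to the right-hand side: it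
  crosses the touch-graph edge \<open>t\<close> exactly when \<open>h, h'\<close> lie at \<open>v\<close> in different single
  transitions of \<open>P\<close>, and then towards the head iff \<open>h' \<in> O\<close>. Since the traversals of a closed
  walk join the second half-edge of each directed single transition to the first half-edge of the
  next one, both sums equal \<open>\<Sum> f h' - \<Sum> f h\<close> over the directed single transitions.\<close>

lemma sum_list_rotate1 [simp]:
  fixes xs :: "'a::comm_monoid_add list"
  shows "sum_list (rotate1 xs) = sum_list xs"
  by (cases xs) (simp_all add: add.commute)

lemma walk_travs_eq_zip: "walk_travs W = zip (map snd W) (rotate1 (map fst W))"
proof (rule nth_equalityI)
  fix i assume "i < length (walk_travs W)"
  then have "i < length W"
    by (simp add: walk_travs_def)
  then have "Suc i mod length W < length W"
    by (intro mod_less_divisor) linarith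
  then show "walk_travs W ! i = zip (map snd W) (rotate1 (map fst W)) ! i"
    using \<open>i < length (walk_travs W)\<close> by (simp add: walk_travs_def nth_rotate1)
qed (simp add: walk_travs_def)

lemma sum_list_walk_travs_diff:
  fixes f :: "'h \<Rightarrow> 'a::ab_group_add"
  shows "(\<Sum>p\<leftarrow>walk_travs W. f (fst p) - f (snd p)) = (\<Sum>p\<leftarrow>W. f (snd p) - f (fst p))"
proof -
  have travs: "map fst (walk_travs W) = map snd W" "map snd (walk_travs W) = rotate1 (map fst W)"
    by (simp_all add: walk_travs_eq_zip)
  have "(\<Sum>p\<leftarrow>walk_travs W. f (fst p) - f (snd p))
      = sum_list (map f (map fst (walk_travs W))) - sum_list (map f (map snd (walk_travs W)))"
    by (simp add: sum_list_subtractf o_def)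
  also have "\<dots> = sum_list (map f (map snd W)) - sum_list (map f (rotate1 (map fst W)))"
    by (simp only: travs)
  also have "\<dots> = (\<Sum>p\<leftarrow>W. f (snd p) - f (fst p))"
    by (simp add: sum_list_subtractf o_def flip: rotate1_map)
  finally show ?thesis .
qed

lemma graph_finite_edges:
  assumes "graph V H E eps"
  shows "finite E"
proof -
  have "E \<subseteq> Pow H" "finite H"
    using assms by (auto simp: graph_def)
  then show ?thesis
    by (meson finite_Pow_iff finite_subset)
qed

lemma closed_walk_travs_proper:
  assumes "graph V H E eps" "closed_walk H E eps W" "p \<in> set (walk_travs W)"
  shows "{fst p, snd p} \<in> E" "fst p \<noteq> snd p"
proof -
  show "{fst p, snd p} \<in> E"
    using assms(2,3) by (auto simp: closed_walk_def walk_travs_def)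
  then have "card {fst p, snd p} = 2"
    using assms(1) by (simp add: graph_def)
  then show "fst p \<noteq> snd p"
    by auto
qed

lemma sigma_trav_Cons:
  "sigma_trav tail (q # qs) e = sigma_trav tail [q] e + sigma_trav tail qs e"
  by (simp add: sigma_trav_def)

lemma sigma_trav_filter_loops:
  assumes "card e = 2"
  shows "sigma_trav tail (filter (\<lambda>q. fst q \<noteq> snd q) qs) e = sigma_trav tail qs e"
  using assms by (induction qs) (auto simp: sigma_trav_def)

lemma sum_sigma_trav_Delta_single:
  assumes "finite E" "directed_version E tailf" "{a, b} \<in> E" "a \<noteq> b"
  shows "(\<Sum>e\<in>E. of_int (sigma_trav tailf [(a, b)] e) * Delta tailf ori e t)
    = of_bool (a \<in> ori t) - of_bool (b \<in> ori t)"
proof -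
  have tail: "tailf {a, b} \<in> {a, b}"
    using assms(2,3) unfolding directed_version_def by blast
  have "(\<Sum>e\<in>E. of_int (sigma_trav tailf [(a, b)] e) * Delta tailf ori e t)
      = (\<Sum>e\<in>E. if e = {a, b} then of_int (sigma_trav tailf [(a, b)] {a, b}) * Delta tailf ori {a, b} t
          else 0)"
    by (rule sum.cong) (auto simp: sigma_trav_def)
  also have "\<dots> = of_int (sigma_trav tailf [(a, b)] {a, b}) * Delta tailf ori {a, b} t"
    using assms(1,3) by simp
  also have "\<dots> = of_bool (a \<in> ori t) - of_bool (b \<in> ori t)"
    using tail \<open>a \<noteq> b\<close> by (cases "a \<in> ori t"; cases "b \<in> ori t") (auto simp: sigma_trav_def Delta_def)
  finally show ?thesis .
qed

lemma sum_sigma_trav_Delta: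
  assumes "finite E" "directed_version E tailf" "\<forall>p\<in>set trs. {fst p, snd p} \<in> E \<and> fst p \<noteq> snd p"
  shows "(\<Sum>e\<in>E. of_int (sigma_trav tailf trs e) * Delta tailf ori e t)
    = (\<Sum>p\<leftarrow>trs. of_bool (fst p \<in> ori t) - of_bool (snd p \<in> ori t))"
  using assms(3)
proof (induction trs)
  case Nil
  then show ?case by (simp add: sigma_trav_def)
next
  case (Cons p trs)
  obtain a b where p: "p = (a, b)" by fastforce
  have "(\<Sum>e\<in>E. of_int (sigma_trav tailf (p # trs) e) * Delta tailf ori e t)
      = (\<Sum>e\<in>E. of_int (sigma_trav tailf [(a, b)] e) * Delta tailf ori e t)
        + (\<Sum>e\<in>E. of_int (sigma_trav tailf trs e) * Delta tailf ori e t)"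
    by (simp add: p sigma_trav_Cons[of _ _ trs] distrib_right sum.distrib)
  then show ?case
    using Cons sum_sigma_trav_Delta_single[OF assms(1,2)] by (simp add: p)
qed

lemma sum_sigma_Delta_closed_walk:
  assumes "graph V H E eps" "directed_version E tailf" "closed_walk H E eps W"
  shows "(\<Sum>e\<in>E. of_int (sigma tailf W e) * Delta tailf ori e t)
    = (\<Sum>p\<leftarrow>W. of_bool (snd p \<in> ori t) - of_bool (fst p \<in> ori t))"
proof -
  have "(\<Sum>e\<in>E. of_int (sigma tailf W e) * Delta tailf ori e t)
      = (\<Sum>p\<leftarrow>walk_travs W. of_bool (fst p \<in> ori t) - of_bool (snd p \<in> ori t))"
    unfolding sigma_def using closed_walk_travs_proper[OF assms(1,3)]
    by (intro sum_sigma_trav_Delta[OF graph_finite_edges[OF assms(1)] assms(2)]) blast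
  also have "\<dots> = (\<Sum>p\<leftarrow>W. of_bool (snd p \<in> ori t) - of_bool (fst p \<in> ori t))"
    by (rule sum_list_walk_travs_diff)
  finally show ?thesis .
qed

lemma sigma_trav_touch_single:
  assumes t: "t = {Hd, Tl}" "Hd \<noteq> Tl" "Hd \<inter> Tl = {}" "tail t = Tl"
    and st_in: "\<And>x. x \<in> Hd \<union> Tl \<Longrightarrow> st x \<in> t"
    and st_mem: "h \<in> st h" "h' \<in> st h'"
    and same_vertex: "h \<in> Hd \<union> Tl \<longleftrightarrow> h' \<in> Hd \<union> Tl"
  shows "sigma_trav tail [(st h, st h')] t = of_bool (h' \<in> Hd) - of_bool (h \<in> Hd)"
proof (cases "h \<in> Hd \<union> Tl")
  case True
  have head_iff: "x \<in> Hd \<longleftrightarrow> st x = Hd" if "x \<in> Hd \<union> Tl" "x \<in> st x" for x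
    using t(1-3) st_in[OF that(1)] that by blast
  have "st h \<in> t" "st h' \<in> t"
    using True st_in same_vertex by blast+
  then show ?thesis
    using head_iff[of h] head_iff[of h'] True t(1,2,4) st_mem same_vertex
    by (auto simp: sigma_trav_def doubleton_eq_iff)
next
  case False
  then have "st h \<notin> t" "h \<notin> Hd" "h' \<notin> Hd"
    using t(1) st_mem(1) same_vertex by blast+
  then show ?thesis
    by (auto simp: sigma_trav_def)
qed

lemma sigma_trav_touch:
  assumes "t = {Hd, Tl}" "Hd \<noteq> Tl" "Hd \<inter> Tl = {}" "tail t = Tl" "\<And>x. x \<in> Hd \<union> Tl \<Longrightarrow> st x \<in> t"
    and "\<forall>p\<in>set W. fst p \<in> st (fst p) \<and> snd p \<in> st (snd p) \<and> (fst p \<in> Hd \<union> Tl \<longleftrightarrow> snd p \<in> Hd \<union> Tl)"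
  shows "sigma_trav tail (map (\<lambda>p. (st (fst p), st (snd p))) W) t
    = (\<Sum>p\<leftarrow>W. of_bool (snd p \<in> Hd) - of_bool (fst p \<in> Hd))"
  using assms(6)
proof (induction W)
  case Nil
  then show ?case by (simp add: sigma_trav_def)
next
  case (Cons p W)
  then show ?case
    using sigma_trav_touch_single[of t Hd Tl tail st "fst p" "snd p", OF assms(1-5)]
    by (simp add: sigma_trav_Cons[of _ _ "map _ W"])
qed

lemma P_strans_ex1:
  assumes "circuit_partition H E eps P" "h \<in> H"
  shows "\<exists>!s. s \<in> P_strans P \<and> h \<in> s"
proof -
  have unique: "\<exists>!(C, s). C \<in> P \<and> s \<in> circ_strans C \<and> h \<in> s"
    using assms by (simp add: circuit_partition_def)
  then obtain C s where "C \<in> P" "s \<in> circ_strans C" "h \<in> s"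
    by auto
  moreover have "s1 = s2" if mem1: "s1 \<in> P_strans P" "h \<in> s1" and mem2: "s2 \<in> P_strans P" "h \<in> s2" for s1 s2
  proof -
    obtain C1 C2 where "C1 \<in> P" "s1 \<in> circ_strans C1" "C2 \<in> P" "s2 \<in> circ_strans C2"
      using mem1(1) mem2(1) by (auto simp: P_strans_def)
    then have "(C1, s1) = (C2, s2)"
      using unique mem1(2) mem2(2) by (auto dest: Uniq_D)
    then show ?thesis by simp
  qed
  ultimately show ?thesis
    by (auto simp: P_strans_def)
qed

lemma st_of_unique:
  assumes "circuit_partition H E eps P" "h \<in> H" "s \<in> P_strans P" "h \<in> s"
  shows "st_of P h = s"
  unfolding st_of_def by (rule the1_equality[OF P_strans_ex1[OF assms(1,2)]]) (use assms(3,4) in blast)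

lemma st_of_mem:
  assumes "circuit_partition H E eps P" "h \<in> H"
  shows "h \<in> st_of P h"
  unfolding st_of_def using theI'[OF P_strans_ex1[OF assms]] by blast

lemma transition_head_tail:
  assumes "t \<in> transitions V H eps" "transitional_orientation V H eps ori"
  obtains v where "t = {ori t, tch_tail ori t}" "ori t \<noteq> tch_tail ori t"
    "ori t \<inter> tch_tail ori t = {}" "ori t \<union> tch_tail ori t = {h\<in>H. eps h = v}"
proof -
  obtain v s1 s2 where t: "t = {s1, s2}" "single_transition H eps s1" "single_transition H eps s2"
    "s1 \<inter> s2 = {}" "s1 \<union> s2 = {h\<in>H. eps h = v}"
    using assms(1) unfolding transitions_def by blast
  have "s1 \<noteq> s2"
    using t(2,4) unfolding single_transition_def by blast
  moreover have "ori t \<in> t"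
    using assms unfolding transitional_orientation_def by blast
  ultimately have "tch_tail ori t = (if ori t = s1 then s2 else s1)"
    unfolding tch_tail_def using t(1) by (intro the_equality) auto
  then have "ori t = s1 \<and> tch_tail ori t = s2 \<or> ori t = s2 \<and> tch_tail ori t = s1"
    using t(1) \<open>ori t \<in> t\<close> by auto
  then show ?thesis
  proof
    assume "ori t = s1 \<and> tch_tail ori t = s2"
    with t(1,4,5) \<open>s1 \<noteq> s2\<close> show ?thesis
      by (intro that[of v]) simp_all
  next
    assume "ori t = s2 \<and> tch_tail ori t = s1"
    with t(1,4,5) \<open>s1 \<noteq> s2\<close> show ?thesis
      by (intro that[of v]) (simp_all add: insert_commute Int_commute Un_commute)
  qed
qed

lemma sigma_trav_pi_P:
  assumes P: "circuit_partition H E eps P" and W: "closed_walk H E eps W"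
    and ori: "transitional_orientation V H eps ori" and t: "t \<in> tau V H eps P"
  shows "sigma_trav (tch_tail ori) (pi_P P W) t
    = (\<Sum>p\<leftarrow>W. of_bool (snd p \<in> ori t) - of_bool (fst p \<in> ori t))"
proof -
  let ?O = "ori t" and ?T = "tch_tail ori t"
  have "t \<in> transitions V H eps"
    using t by (simp add: tau_def)
  then obtain v where ht: "t = {?O, ?T}" "?O \<noteq> ?T" "?O \<inter> ?T = {}" "?O \<union> ?T = {h\<in>H. eps h = v}"
    by (rule transition_head_tail[OF _ ori])
  have "card t = 2"
    unfolding card_2_iff using ht(1,2) by blast
  then have "sigma_trav (tch_tail ori) (pi_P P W) t
      = sigma_trav (tch_tail ori) (map (\<lambda>p. (st_of P (fst p), st_of P (snd p))) W) t"
    unfolding pi_P_def by (rule sigma_trav_filter_loops)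
  also have "\<dots> = (\<Sum>p\<leftarrow>W. of_bool (snd p \<in> ?O) - of_bool (fst p \<in> ?O))"
  proof (rule sigma_trav_touch[of t ?O ?T "tch_tail ori" "st_of P" W, OF ht(1-3) refl])
    fix x assume x: "x \<in> ?O \<union> ?T"
    then obtain s where "s \<in> t" "x \<in> s"
      using ht(1) by blast
    moreover from \<open>s \<in> t\<close> have "s \<in> P_strans P"
      using t by (simp add: tau_def)
    moreover have "x \<in> H"
      using x ht(4) by blast
    ultimately show "st_of P x \<in> t"
      using st_of_unique[OF P] by simp
  next
    show "\<forall>p\<in>set W. fst p \<in> st_of P (fst p) \<and> snd p \<in> st_of P (snd p)
        \<and> (fst p \<in> ?O \<union> ?T \<longleftrightarrow> snd p \<in> ?O \<union> ?T)"
      using W st_of_mem[OF P] ht(4) by (auto simp: closed_walk_def dir_single_transition_def)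
  qed
  finally show ?thesis .
qed

theorem mainTheorem4:
  fixes V :: "'v set" and H :: "'h set" and E :: "'h set set" and eps :: "'h \<Rightarrow> 'v"
    and tailf :: "'h set \<Rightarrow> 'h" and ori :: "'h set set \<Rightarrow> 'h set"
    and P :: "('h \<times> 'h) list set set" and W :: "('h \<times> 'h) list"
  assumes "graph V H E eps"
    and "four_regular V H eps"
    and "directed_version E tailf"
    and "transitional_orientation V H eps ori"
    and "circuit_partition H E eps P"
    and "closed_walk H E eps W"
  shows "\<forall>t\<in>tau V H eps P.
     (\<Sum>e\<in>E. of_int (sigma tailf W e) * Delta tailf ori e t)
       = of_int (sigma_trav (tch_tail ori) (pi_P P W) t)"
proof
  fix t assume t: "t \<in> tau V H eps P"
  have "(\<Sum>e\<in>E. of_int (sigma tailf W e) * Delta tailf ori e t)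
      = (\<Sum>p\<leftarrow>W. of_bool (snd p \<in> ori t) - of_bool (fst p \<in> ori t))"
    by (rule sum_sigma_Delta_closed_walk[OF assms(1,3,6)])
  also have "\<dots> = of_int (\<Sum>p\<leftarrow>W. of_bool (snd p \<in> ori t) - of_bool (fst p \<in> ori t))"
    by (induction W) simp_all
  also have "\<dots> = of_int (sigma_trav (tch_tail ori) (pi_P P W) t)"
    by (simp only: sigma_trav_pi_P[OF assms(5,6,4) t])
  finally show "(\<Sum>e\<in>E. of_int (sigma tailf W e) * Delta tailf ori e t)
      = of_int (sigma_trav (tch_tail ori) (pi_P P W) t)" .
qed

end
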